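(* Let $A\subseteq\mathbb R^{d_x}$ be any measurable set, $W\sim N(0,I_{d_x})$ and $\bar W=W\mathbf 1\{W\in A\}$, and suppose $\mathbf P(W\notin A)\le1/12$. Then $\frac12I\preccurlyeq\mathbb{E}[\bar W\bar W^\top]\preccurlyeq I$.
   Context: $\preccurlyeq$ denotes the Loewner (positive semidefinite) order. *)

theory Defs
  imports "HOL-Probability.Probability"
begin

definition std_gauss_vec_density :: "real ^ 'n \<Rightarrow> real" where
  "std_gauss_vec_density x = (\<Prod>i\<in>UNIV. std_normal_density (x $ i))"

definition psd :: "real ^ 'n ^ 'n \<Rightarrow> bool" where
  "psd M \<longleftrightarrow> transpose M = M \<and> (\<forall>v. 0 \<le> v \<bullet> (M *v v))"

definition loewner_le :: "real ^ 'n ^ 'n \<Rightarrow> real ^ 'n ^ 'n \<Rightarrow> bool" where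
  "loewner_le M N \<longleftrightarrow> psd (N - M)"

end

theory Submission
  imports Defs
begin

(* For a vector v the quadratic form of E[Wb Wb^T] is E[(v.W)^2 1{W in A}], and v.W is
   centred normal with variance |v|^2 and fourth moment 3|v|^4. Dropping the indicator gives
   the upper bound. For the lower bound, the pointwise inequality y <= 3s + y^2/(12s) with
   y = (v.W)^2, s = |v|^2 bounds the lost mass E[(v.W)^2 1{W notin A}] by
   3s P(W notin A) + s/4 <= s/2. *)

definition second_moment_matrix :: "'a measure \<Rightarrow> ('a \<Rightarrow> real ^ 'n) \<Rightarrow> real ^ 'n ^ 'n" where
  "second_moment_matrix M X = (\<chi> i j. \<integral>\<omega>. X \<omega> $ i * X \<omega> $ j \<partial>M)"

lemma integrable_component_mult:
  fixes X :: "'a \<Rightarrow> real ^ 'n"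
  assumes "\<And>v. integrable M (\<lambda>\<omega>. (v \<bullet> X \<omega>)\<^sup>2)"
  shows "integrable M (\<lambda>\<omega>. X \<omega> $ i * X \<omega> $ j)"
proof -
  have "X \<omega> $ i * X \<omega> $ j
      = ((axis i 1 + axis j 1) \<bullet> X \<omega>)\<^sup>2 / 2 - (axis i 1 \<bullet> X \<omega>)\<^sup>2 / 2 - (axis j 1 \<bullet> X \<omega>)\<^sup>2 / 2" for \<omega>
    by (simp add: inner_add_left inner_axis' power2_eq_square algebra_simps)
  then show ?thesis
    using assms by simp
qed

lemma second_moment_matrix_quadratic_form:
  fixes X :: "'a \<Rightarrow> real ^ 'n"
  assumes "\<And>v. integrable M (\<lambda>\<omega>. (v \<bullet> X \<omega>)\<^sup>2)"
  shows "v \<bullet> (second_moment_matrix M X *v v) = (\<integral>\<omega>. (v \<bullet> X \<omega>)\<^sup>2 \<partial>M)"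
proof -
  have "v \<bullet> (second_moment_matrix M X *v v)
      = (\<Sum>i\<in>UNIV. \<Sum>j\<in>UNIV. \<integral>\<omega>. v $ i * v $ j * (X \<omega> $ i * X \<omega> $ j) \<partial>M)"
    by (simp add: second_moment_matrix_def inner_vec_def matrix_vector_mult_def
        sum_distrib_left mult_ac)
  also have "\<dots> = (\<integral>\<omega>. (\<Sum>i\<in>UNIV. \<Sum>j\<in>UNIV. v $ i * v $ j * (X \<omega> $ i * X \<omega> $ j)) \<partial>M)"
    using integrable_component_mult[OF assms] by simp
  also have "\<dots> = (\<integral>\<omega>. (v \<bullet> X \<omega>)\<^sup>2 \<partial>M)"
    by (simp add: inner_vec_def power2_eq_square sum_product mult_ac)
  finally show ?thesis .
qed

lemma transpose_second_moment_matrix: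
  "transpose (second_moment_matrix M X) = second_moment_matrix M X"
  by (simp add: second_moment_matrix_def transpose_def vec_eq_iff mult.commute)

lemma loewner_leI:
  fixes P Q :: "real ^ 'n ^ 'n"
  assumes "transpose P = P" "transpose Q = Q" "\<And>v. v \<bullet> (Q *v v) \<le> v \<bullet> (P *v v)"
  shows "loewner_le Q P"
  using assms
  by (simp add: loewner_le_def psd_def transpose_def vec_eq_iff matrix_vector_mult_diff_rdistrib
      inner_diff_right)

lemma second_moment_matrix_loewner_bounds:
  fixes X :: "'a \<Rightarrow> real ^ 'n"
  assumes "\<And>v. integrable M (\<lambda>\<omega>. (v \<bullet> X \<omega>)\<^sup>2)"
    and "\<And>v. c * (norm v)\<^sup>2 \<le> (\<integral>\<omega>. (v \<bullet> X \<omega>)\<^sup>2 \<partial>M)"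
    and "\<And>v. (\<integral>\<omega>. (v \<bullet> X \<omega>)\<^sup>2 \<partial>M) \<le> d * (norm v)\<^sup>2"
  shows "loewner_le (c *\<^sub>R mat 1) (second_moment_matrix M X)"
    and "loewner_le (second_moment_matrix M X) (d *\<^sub>R mat 1)"
proof -
  have "transpose (a *\<^sub>R mat 1 :: real ^ 'n ^ 'n) = a *\<^sub>R mat 1" for a :: real
    by (simp add: transpose_def vec_eq_iff mat_def)
  moreover have "v \<bullet> ((a *\<^sub>R mat 1) *v v) = a * (norm v)\<^sup>2" for a :: real and v :: "real ^ 'n"
    by (simp add: scaleR_matrix_vector_assoc[symmetric] power2_norm_eq_inner)
  ultimately
  show "loewner_le (c *\<^sub>R mat 1) (second_moment_matrix M X)"
    "loewner_le (second_moment_matrix M X) (d *\<^sub>R mat 1)"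
    using assms
    by (auto intro!: loewner_leI simp: transpose_second_moment_matrix
        second_moment_matrix_quadratic_form)
qed

lemma le_add_square_div:
  fixes t x :: real
  assumes "0 < t"
  shows "x \<le> t + x\<^sup>2 / (4 * t)"
proof -
  have "x\<^sup>2 / (4 * t) - x + t = (x - 2 * t)\<^sup>2 / (4 * t)"
    using assms by (simp add: field_simps power2_eq_square)
  also have "\<dots> \<ge> 0"
    using assms by simp
  finally show ?thesis by simp
qed

lemma (in prob_space) integral_mult_indicator_le:
  fixes Y :: "'a \<Rightarrow> real"
  assumes "integrable M Y" "integrable M (\<lambda>\<omega>. (Y \<omega>)\<^sup>2)" "C \<in> events" "0 < t"
  shows "expectation (\<lambda>\<omega>. Y \<omega> * indicator C \<omega>)
    \<le> t * prob C + expectation (\<lambda>\<omega>. (Y \<omega>)\<^sup>2) / (4 * t)"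
proof -
  have indicator_C: "integrable M (indicator C :: 'a \<Rightarrow> real)"
    using \<open>C \<in> events\<close> by (simp add: emeasure_eq_measure)
  have "expectation (\<lambda>\<omega>. Y \<omega> * indicator C \<omega>)
      \<le> expectation (\<lambda>\<omega>. t * indicator C \<omega> + (Y \<omega>)\<^sup>2 / (4 * t))"
  proof (rule Bochner_Integration.integral_mono)
    show "integrable M (\<lambda>\<omega>. Y \<omega> * indicator C \<omega>)"
      using assms by (intro integrable_real_mult_indicator)
    show "integrable M (\<lambda>\<omega>. t * indicator C \<omega> + (Y \<omega>)\<^sup>2 / (4 * t))"
      using assms indicator_C by simp
    show "Y \<omega> * indicator C \<omega> \<le> t * indicator C \<omega> + (Y \<omega>)\<^sup>2 / (4 * t)" for \<omega>
      using le_add_square_div[OF \<open>0 < t\<close>, of "Y \<omega>"] \<open>0 < t\<close> by (simp add: indicator_def)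
  qed
  also have "\<dots> = t * prob C + expectation (\<lambda>\<omega>. (Y \<omega>)\<^sup>2) / (4 * t)"
    using assms indicator_C by (subst Bochner_Integration.integral_add) auto
  finally show ?thesis .
qed

lemma (in prob_space) half_mean_le_integral_mult_indicator:
  fixes Y :: "'a \<Rightarrow> real"
  assumes "integrable M Y" "integrable M (\<lambda>\<omega>. (Y \<omega>)\<^sup>2)" "E \<in> events"
    and "expectation Y = s" "0 < s" "expectation (\<lambda>\<omega>. (Y \<omega>)\<^sup>2) \<le> 3 * s\<^sup>2"
    and "prob (space M - E) \<le> 1 / 12"
  shows "s / 2 \<le> expectation (\<lambda>\<omega>. Y \<omega> * indicator E \<omega>)"
proof -
  let ?C = "space M - E"
  have C: "?C \<in> events"
    using assms(3) by auto
  have "expectation (\<lambda>\<omega>. Y \<omega> * indicator ?C \<omega>)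
      \<le> 3 * s * prob ?C + expectation (\<lambda>\<omega>. (Y \<omega>)\<^sup>2) / (12 * s)"
    using integral_mult_indicator_le[OF assms(1,2) C, of "3 * s"] \<open>0 < s\<close> by simp
  also have "\<dots> \<le> 3 * s * (1 / 12) + 3 * s\<^sup>2 / (12 * s)"
    using assms(5-7) by (intro add_mono mult_left_mono divide_right_mono) auto
  also have "\<dots> = s / 2"
    using \<open>0 < s\<close> by (simp add: power2_eq_square)
  finally have "expectation (\<lambda>\<omega>. Y \<omega> * indicator ?C \<omega>) \<le> s / 2" .
  moreover have "expectation (\<lambda>\<omega>. Y \<omega> * indicator E \<omega>)
      = expectation (\<lambda>\<omega>. Y \<omega> - Y \<omega> * indicator ?C \<omega>)"
    by (intro Bochner_Integration.integral_cong) (auto simp: indicator_def)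
  moreover have "\<dots> = s - expectation (\<lambda>\<omega>. Y \<omega> * indicator ?C \<omega>)"
    using assms C
    by (subst Bochner_Integration.integral_diff) (auto intro: integrable_real_mult_indicator)
  ultimately show ?thesis
    by simp
qed

lemma density_PiM_prod:
  fixes M :: "'i \<Rightarrow> 'a measure" and f :: "'i \<Rightarrow> 'a \<Rightarrow> ennreal"
  assumes "finite I"
    and "\<And>i. sigma_finite_measure (M i)"
    and "\<And>i. sigma_finite_measure (density (M i) (f i))"
    and [measurable]: "\<And>i. i \<in> I \<Longrightarrow> f i \<in> borel_measurable (M i)"
  shows "density (PiM I M) (\<lambda>x. \<Prod>i\<in>I. f i (x i)) = PiM I (\<lambda>i. density (M i) (f i))"
proof -
  interpret M: product_sigma_finite M
    by (simp add: product_sigma_finite_def assms(2))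
  interpret D: product_sigma_finite "\<lambda>i. density (M i) (f i)"
    by (simp add: product_sigma_finite_def assms(3))
  show ?thesis
  proof (rule D.PiM_eqI[OF \<open>finite I\<close>])
    show "sets (density (PiM I M) (\<lambda>x. \<Prod>i\<in>I. f i (x i))) = sets (PiM I (\<lambda>i. density (M i) (f i)))"
      by (simp cong: sets_PiM_cong)
    fix A assume "\<And>i. i \<in> I \<Longrightarrow> A i \<in> sets (density (M i) (f i))"
    then have A[measurable]: "\<And>i. i \<in> I \<Longrightarrow> A i \<in> sets (M i)" by simp
    have "emeasure (density (PiM I M) (\<lambda>x. \<Prod>i\<in>I. f i (x i))) (PiE I A)
        = (\<integral>\<^sup>+x. (\<Prod>i\<in>I. f i (x i)) * indicator (PiE I A) x \<partial>PiM I M)"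
      using A by (intro emeasure_density sets_PiM_I_finite \<open>finite I\<close>) auto
    also have "\<dots> = (\<integral>\<^sup>+x. (\<Prod>i\<in>I. f i (x i) * indicator (A i) (x i)) \<partial>PiM I M)"
      using \<open>finite I\<close>
      by (intro nn_integral_cong)
         (auto simp: space_PiM PiE_iff indicator_def prod.distrib[symmetric] prod.neutral)
    also have "\<dots> = (\<Prod>i\<in>I. \<integral>\<^sup>+y. f i y * indicator (A i) y \<partial>M i)"
      using A by (intro M.product_nn_integral_prod \<open>finite I\<close>) auto
    also have "\<dots> = (\<Prod>i\<in>I. emeasure (density (M i) (f i)) (A i))"
      using A by (intro prod.cong refl) (simp add: emeasure_density)
    finally show "emeasure (density (PiM I M) (\<lambda>x. \<Prod>i\<in>I. f i (x i))) (PiE I A)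
        = (\<Prod>i\<in>I. emeasure (density (M i) (f i)) (A i))" .
  qed
qed

abbreviation std_normal_measure :: "real measure" where
  "std_normal_measure \<equiv> density lborel (\<lambda>x. ennreal (std_normal_density x))"

lemma prob_space_std_normal_measure: "prob_space std_normal_measure"
  using real_dist_normal_dist by (simp add: real_distribution_def)

lemma std_gauss_vec_density_eq_prod_Basis:
  "std_gauss_vec_density (x :: real ^ 'n) = (\<Prod>b\<in>Basis. std_normal_density (x \<bullet> b))"
proof -
  have Basis_eq: "(Basis :: (real ^ 'n) set) = range (\<lambda>i. axis i 1)"
    by (auto simp: Basis_vec_def)
  have "inj (\<lambda>i::'n. axis i (1::real))"
    by (auto simp: inj_def axis_eq_axis)
  then show ?thesis
    unfolding std_gauss_vec_density_def Basis_eq by (subst prod.reindex) (auto simp: inner_axis)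
qed

lemma density_std_gauss_vec_eq_distr_PiM:
  "density lborel (\<lambda>x :: real ^ 'n. ennreal (std_gauss_vec_density x))
   = distr (PiM Basis (\<lambda>_. std_normal_measure)) borel (\<lambda>f. \<Sum>b\<in>Basis. f b *\<^sub>R b)"
proof -
  let ?P = "PiM (Basis :: (real ^ 'n) set) (\<lambda>_. lborel :: real measure)"
  let ?T = "\<lambda>f. \<Sum>b\<in>(Basis :: (real ^ 'n) set). f b *\<^sub>R b"
  let ?g = "\<lambda>x :: real ^ 'n. ennreal (std_gauss_vec_density x)"
  have [measurable]: "?g \<in> borel_measurable borel"
    unfolding std_gauss_vec_density_def by measurable
  have "density lborel ?g = distr (density ?P (\<lambda>f. ?g (?T f))) borel ?T"
    by (subst lborel_eq) (rule density_distr; measurable)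
  also have "density ?P (\<lambda>f. ?g (?T f))
      = density ?P (\<lambda>f. \<Prod>b\<in>Basis. ennreal (std_normal_density (f b)))"
    by (intro density_cong AE_I2)
       (simp_all add: std_gauss_vec_density_eq_prod_Basis prod_ennreal)
  also have "\<dots> = PiM Basis (\<lambda>_. std_normal_measure)"
    using prob_space_std_normal_measure
    by (intro density_PiM_prod) (auto intro: prob_space_imp_sigma_finite sigma_finite_lborel)
  finally show ?thesis .
qed

locale std_gaussian_vector = prob_space +
  fixes W :: "'a \<Rightarrow> real ^ 'n"
  assumes distributed_W: "distributed M lborel W (\<lambda>x. ennreal (std_gauss_vec_density x))"
begin

lemma W_measurable[measurable]: "W \<in> borel_measurable M"
  using distributed_W by (simp add: distributed_def)

lemma distr_coordinates:
  "distr M (PiM Basis (\<lambda>_. borel)) (\<lambda>\<omega>. \<lambda>b\<in>Basis. W \<omega> \<bullet> b) = PiM Basis (\<lambda>_. std_normal_measure)"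
proof -
  let ?U = "\<lambda>x :: real ^ 'n. \<lambda>b\<in>Basis. x \<bullet> b"
  let ?T = "\<lambda>f. \<Sum>b\<in>(Basis :: (real ^ 'n) set). f b *\<^sub>R b"
  let ?N = "PiM (Basis :: (real ^ 'n) set) (\<lambda>_. std_normal_measure)"
  have [measurable]: "?U \<in> measurable borel (PiM Basis (\<lambda>_. borel))" by measurable
  have "distr M (PiM Basis (\<lambda>_. borel)) (\<lambda>\<omega>. ?U (W \<omega>))
      = distr (distr M lborel W) (PiM Basis (\<lambda>_. borel)) ?U"
    by (subst distr_distr) (simp_all add: comp_def)
  also have "\<dots> = distr (distr ?N borel ?T) (PiM Basis (\<lambda>_. borel)) ?U"
    using distributed_W by (simp add: distributed_def density_std_gauss_vec_eq_distr_PiM)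
  also have "\<dots> = distr ?N (PiM Basis (\<lambda>_. borel)) (?U \<circ> ?T)"
    by (rule distr_distr) measurable
  also have "\<dots> = distr ?N ?N (\<lambda>f. f)"
    by (rule distr_cong)
       (auto simp: space_PiM PiE_def extensional_def fun_eq_iff
             cong: sets_PiM_cong)
  finally show ?thesis by simp
qed

lemma coordinate_distributed:
  assumes "b \<in> Basis"
  shows "distributed M lborel (\<lambda>\<omega>. W \<omega> \<bullet> b) (\<lambda>x. ennreal (std_normal_density x))"
proof -
  have "distr M lborel (\<lambda>\<omega>. W \<omega> \<bullet> b)
      = distr (distr M (PiM Basis (\<lambda>_. borel)) (\<lambda>\<omega>. \<lambda>b\<in>Basis. W \<omega> \<bullet> b)) lborel (\<lambda>f. f b)"
    using assms by (subst distr_distr) (auto simp: comp_def)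
  also have "\<dots> = distr (PiM Basis (\<lambda>_. std_normal_measure)) std_normal_measure (\<lambda>f. f b)"
    unfolding distr_coordinates by (rule distr_cong) auto
  also have "\<dots> = std_normal_measure"
    using assms prob_space_std_normal_measure by (intro distr_PiM_component) auto
  finally show ?thesis
    by (simp add: distributed_def)
qed

lemma indep_coordinates: "indep_vars (\<lambda>_. borel) (\<lambda>b \<omega>. W \<omega> \<bullet> b) Basis"
proof -
  have "(\<Pi>\<^sub>M b\<in>Basis. distr M borel (\<lambda>\<omega>. W \<omega> \<bullet> b)) = PiM Basis (\<lambda>_. std_normal_measure)"
    using coordinate_distributed
    by (intro PiM_cong refl) (simp add: distributed_def cong: distr_cong)
  then show ?thesis
    by (subst indep_vars_iff_distr_eq_PiM) (simp_all add: distr_coordinates)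
qed

lemma inner_distributed:
  assumes "v \<noteq> 0"
  shows "distributed M lborel (\<lambda>\<omega>. v \<bullet> W \<omega>) (\<lambda>x. ennreal (normal_density 0 (norm v) x))"
proof -
  define I where "I = {b \<in> Basis. v \<bullet> b \<noteq> 0}"
  have I: "finite I" "I \<subseteq> Basis" "I \<noteq> {}"
    using assms euclidean_all_zero_iff[of v] unfolding I_def by auto
  have "indep_vars (\<lambda>_. borel) (\<lambda>b \<omega>. (v \<bullet> b) * (W \<omega> \<bullet> b)) I"
    by (rule indep_vars_subset[OF indep_vars_compose2[OF indep_coordinates] I(2)]) auto
  moreover have "distributed M lborel (\<lambda>\<omega>. (v \<bullet> b) * (W \<omega> \<bullet> b)) (normal_density 0 \<bar>v \<bullet> b\<bar>)"
    if "b \<in> I" for b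
  proof -
    have b: "b \<in> Basis" "v \<bullet> b \<noteq> 0"
      using that by (auto simp: I_def)
    from normal_density_affine[OF coordinate_distributed[OF b(1)] _ b(2), of 0]
    show ?thesis by simp
  qed
  ultimately have "distributed M lborel (\<lambda>\<omega>. \<Sum>b\<in>I. (v \<bullet> b) * (W \<omega> \<bullet> b))
      (normal_density (\<Sum>b\<in>I. 0) (sqrt (\<Sum>b\<in>I. \<bar>v \<bullet> b\<bar>\<^sup>2)))"
    using I by (intro sum_indep_normal) (auto simp: I_def)
  moreover have "(\<Sum>b\<in>I. (v \<bullet> b) * (x \<bullet> b)) = v \<bullet> x" for x
    using euclidean_inner[of v x] by (simp add: I_def sum.mono_neutral_left)
  ultimately show ?thesis
    by (simp add: norm_eq_sqrt_inner power2_eq_square)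
qed

lemma inner_power_integral:
  assumes "v \<noteq> 0"
  shows "integrable M (\<lambda>\<omega>. (v \<bullet> W \<omega>) ^ k)"
    and "expectation (\<lambda>\<omega>. (v \<bullet> W \<omega>) ^ k) = (\<integral>x. normal_density 0 (norm v) x * x ^ k \<partial>lborel)"
  using integrable_normal_moment[of "norm v" 0 k] assms
    distributed_integrable[OF inner_distributed, of v "\<lambda>x. x ^ k"]
    distributed_integral[OF inner_distributed, of v "\<lambda>x. x ^ k"]
  by simp_all

lemma inner_second_moment:
  shows "integrable M (\<lambda>\<omega>. (v \<bullet> W \<omega>)\<^sup>2)"
    and "expectation (\<lambda>\<omega>. (v \<bullet> W \<omega>)\<^sup>2) = (norm v)\<^sup>2"
  using inner_power_integral[of v 2] integral_normal_moment_even[of "norm v" 0 1]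
  by (cases "v = 0"; simp add: fact_numeral)+

lemma inner_fourth_moment:
  shows "integrable M (\<lambda>\<omega>. (v \<bullet> W \<omega>) ^ 4)"
    and "expectation (\<lambda>\<omega>. (v \<bullet> W \<omega>) ^ 4) = 3 * (norm v) ^ 4"
  using inner_power_integral[of v 4] integral_normal_moment_even[of "norm v" 0 2]
  by (cases "v = 0"; simp add: fact_numeral field_simps)+

lemma integral_inner_square_indicator_le:
  assumes "E \<in> events"
  shows "integrable M (\<lambda>\<omega>. (v \<bullet> W \<omega>)\<^sup>2 * indicator E \<omega>)"
    and "expectation (\<lambda>\<omega>. (v \<bullet> W \<omega>)\<^sup>2 * indicator E \<omega>) \<le> (norm v)\<^sup>2"
proof -
  show "integrable M (\<lambda>\<omega>. (v \<bullet> W \<omega>)\<^sup>2 * indicator E \<omega>)"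
    using assms inner_second_moment(1) by (rule integrable_real_mult_indicator)
  then have "expectation (\<lambda>\<omega>. (v \<bullet> W \<omega>)\<^sup>2 * indicator E \<omega>) \<le> expectation (\<lambda>\<omega>. (v \<bullet> W \<omega>)\<^sup>2)"
    using inner_second_moment(1)
    by (intro Bochner_Integration.integral_mono) (auto simp: indicator_def)
  then show "expectation (\<lambda>\<omega>. (v \<bullet> W \<omega>)\<^sup>2 * indicator E \<omega>) \<le> (norm v)\<^sup>2"
    by (simp add: inner_second_moment(2))
qed

lemma half_norm_square_le_integral_inner_square_indicator:
  assumes "E \<in> events" "prob (space M - E) \<le> 1 / 12"
  shows "(norm v)\<^sup>2 / 2 \<le> expectation (\<lambda>\<omega>. (v \<bullet> W \<omega>)\<^sup>2 * indicator E \<omega>)"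
proof (cases "v = 0")
  case False
  then show ?thesis
    using assms inner_second_moment[of v] inner_fourth_moment[of v]
    by (intro half_mean_le_integral_mult_indicator) simp_all
qed simp

end

theorem proposition14:
  fixes M :: "'s measure" and W :: "'s \<Rightarrow> real ^ 'n" and A :: "(real ^ 'n) set"
  assumes "prob_space M"
    and "A \<in> sets borel"
    and "distributed M lborel W (\<lambda>x. ennreal (std_gauss_vec_density x))"
    and "prob_space.prob M {\<omega> \<in> space M. W \<omega> \<notin> A} \<le> 1/12"
  shows "let Wb = (\<lambda>\<omega>. if W \<omega> \<in> A then W \<omega> else 0);
             S = (\<chi> i j. prob_space.expectation M (\<lambda>\<omega>. Wb \<omega> $ i * Wb \<omega> $ j))
         in loewner_le ((1/2 :: real) *\<^sub>R mat 1) S \<and> loewner_le S (mat 1)"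
proof -
  interpret std_gaussian_vector M W
    using assms(1,3) by (simp add: std_gaussian_vector_def std_gaussian_vector_axioms_def)
  define Wb where "Wb = (\<lambda>\<omega>. if W \<omega> \<in> A then W \<omega> else 0)"
  define E where "E = {\<omega> \<in> space M. W \<omega> \<in> A}"
  have E: "E \<in> events"
    using assms(2) unfolding E_def by measurable
  have "space M - E = {\<omega> \<in> space M. W \<omega> \<notin> A}"
    by (auto simp: E_def)
  then have small_complement: "prob (space M - E) \<le> 1 / 12"
    using assms(4) by simp
  have Wb_sq: "(v \<bullet> Wb \<omega>)\<^sup>2 = (v \<bullet> W \<omega>)\<^sup>2 * indicator E \<omega>" if "\<omega> \<in> space M" for v \<omega>
    using that by (simp add: Wb_def E_def indicator_def)
  have "integrable M (\<lambda>\<omega>. (v \<bullet> Wb \<omega>)\<^sup>2)" for v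
    using integral_inner_square_indicator_le(1)[OF E]
    by (simp add: Bochner_Integration.integrable_cong[OF refl Wb_sq])
  moreover have "expectation (\<lambda>\<omega>. (v \<bullet> Wb \<omega>)\<^sup>2) = expectation (\<lambda>\<omega>. (v \<bullet> W \<omega>)\<^sup>2 * indicator E \<omega>)"
    for v
    by (intro Bochner_Integration.integral_cong) (simp_all add: Wb_sq)
  ultimately show ?thesis
    using second_moment_matrix_loewner_bounds[of M Wb "1 / 2" 1]
      half_norm_square_le_integral_inner_square_indicator[OF E small_complement]
      integral_inner_square_indicator_le(2)[OF E]
    unfolding second_moment_matrix_def Let_def Wb_def by simp
qed

end
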